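(* Let $*$ (revision) and $\div$ (contraction) be operators on belief states satisfying the standing assumptions described in the context. Consider the principle (EHI) for all belief states $\Psi$ and sentences $A,B$: $[(\Psi \div A) * B] = [\Psi * B] \cap [(\Psi * \neg A) * B]$, and the principle (EHIC) for all belief states $\Psi$ and sentences $A,B$: $[(\Psi \div A) \div B] = [\Psi] \cap [\Psi * \neg B] \cap [\Psi * \neg A] \cap [(\Psi * \neg A) * \neg B]$. Then EHI entails EHIC. Moreover, if $*$ satisfies (AGM$*3$) $[\Psi * A] \subseteq \mathrm{Cn}([\Psi] \cup \{A\})$ and the operators satisfy the Levi Identity (LI) $[\Psi * A] = \mathrm{Cn}([\Psi \div \neg A] \cup \{A\})$ for all $\Psi, A$, then EHI and EHIC are equivalent.
   Context: $L$ is a finitely generated propositional language; $\mathrm{Cn}$ denotes classical logical consequence. Belief states $\Psi$ are primitive objects, each determining a deductively closed belief set $[\Psi] \subseteq L$. A revision operator $*$ and a contraction operator $\div$ map a belief state $\Psi$ and a sentence $A$ to belief states $\Psi * A$ and $\Psi \div A$. Standing assumptions: $*$ satisfies the AGM revision postulates, $\div$ satisfies the AGM contraction postulates (in particular, if $\mathrm{Cn}(A)=\mathrm{Cn}(B)$ then $[\Psi \div A] = [\Psi \div B]$ and $[\Psi * A]=[\Psi*B]$), and the Harper Identity holds: $[\Psi \div A] = [\Psi] \cap [\Psi * \neg A]$ for all $\Psi, A$. *)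

theory Defs
  imports Main
begin

text \<open>Atoms range over a finite type, so the language is finitely generated.\<close>

datatype 'a form =
    Atom 'a
  | Bot
  | Neg "'a form"
  | Conj "'a form" "'a form"
  | Disj "'a form" "'a form"
  | Imp "'a form" "'a form"

fun eval :: "('a \<Rightarrow> bool) \<Rightarrow> 'a form \<Rightarrow> bool" where
  "eval v (Atom p) = v p"
| "eval v Bot = False"
| "eval v (Neg A) = (\<not> eval v A)"
| "eval v (Conj A B) = (eval v A \<and> eval v B)"
| "eval v (Disj A B) = (eval v A \<or> eval v B)"
| "eval v (Imp A B) = (eval v A \<longrightarrow> eval v B)"

definition Cn :: "'a form set \<Rightarrow> 'a form set" where
  "Cn S = {A. \<forall>v. (\<forall>B\<in>S. eval v B) \<longrightarrow> eval v A}"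

text \<open>Belief states have type 'b; bs maps a state to its belief set.\<close>

definition belief_sets_closed :: "('b \<Rightarrow> ('a::finite) form set) \<Rightarrow> bool" where
  "belief_sets_closed bs \<longleftrightarrow> (\<forall>\<Psi>. Cn (bs \<Psi>) = bs \<Psi>)"

definition agm_revision ::
  "('b \<Rightarrow> ('a::finite) form set) \<Rightarrow> ('b \<Rightarrow> 'a form \<Rightarrow> 'b) \<Rightarrow> bool" where
  "agm_revision bs rv \<longleftrightarrow>
     (\<forall>\<Psi> A. Cn (bs (rv \<Psi> A)) = bs (rv \<Psi> A)) \<and>
     (\<forall>\<Psi> A. A \<in> bs (rv \<Psi> A)) \<and>
     (\<forall>\<Psi> A. bs (rv \<Psi> A) \<subseteq> Cn (bs \<Psi> \<union> {A})) \<and>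
     (\<forall>\<Psi> A. Neg A \<notin> bs \<Psi> \<longrightarrow> Cn (bs \<Psi> \<union> {A}) \<subseteq> bs (rv \<Psi> A)) \<and>
     (\<forall>\<Psi> A. Neg A \<notin> Cn {} \<longrightarrow> Bot \<notin> bs (rv \<Psi> A)) \<and>
     (\<forall>\<Psi> A B. Cn {A} = Cn {B} \<longrightarrow> bs (rv \<Psi> A) = bs (rv \<Psi> B)) \<and>
     (\<forall>\<Psi> A B. bs (rv \<Psi> (Conj A B)) \<subseteq> Cn (bs (rv \<Psi> A) \<union> {B})) \<and>
     (\<forall>\<Psi> A B. Neg B \<notin> bs (rv \<Psi> A) \<longrightarrow>
                Cn (bs (rv \<Psi> A) \<union> {B}) \<subseteq> bs (rv \<Psi> (Conj A B)))"

definition agm_contraction ::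
  "('b \<Rightarrow> ('a::finite) form set) \<Rightarrow> ('b \<Rightarrow> 'a form \<Rightarrow> 'b) \<Rightarrow> bool" where
  "agm_contraction bs ct \<longleftrightarrow>
     (\<forall>\<Psi> A. Cn (bs (ct \<Psi> A)) = bs (ct \<Psi> A)) \<and>
     (\<forall>\<Psi> A. bs (ct \<Psi> A) \<subseteq> bs \<Psi>) \<and>
     (\<forall>\<Psi> A. A \<notin> bs \<Psi> \<longrightarrow> bs (ct \<Psi> A) = bs \<Psi>) \<and>
     (\<forall>\<Psi> A. A \<notin> Cn {} \<longrightarrow> A \<notin> bs (ct \<Psi> A)) \<and>
     (\<forall>\<Psi> A. bs \<Psi> \<subseteq> Cn (bs (ct \<Psi> A) \<union> {A})) \<and>
     (\<forall>\<Psi> A B. Cn {A} = Cn {B} \<longrightarrow> bs (ct \<Psi> A) = bs (ct \<Psi> B)) \<and>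
     (\<forall>\<Psi> A B. bs (ct \<Psi> A) \<inter> bs (ct \<Psi> B) \<subseteq> bs (ct \<Psi> (Conj A B))) \<and>
     (\<forall>\<Psi> A B. A \<notin> bs (ct \<Psi> (Conj A B)) \<longrightarrow>
                bs (ct \<Psi> (Conj A B)) \<subseteq> bs (ct \<Psi> A))"

definition harper_identity ::
  "('b \<Rightarrow> 'a form set) \<Rightarrow> ('b \<Rightarrow> 'a form \<Rightarrow> 'b) \<Rightarrow> ('b \<Rightarrow> 'a form \<Rightarrow> 'b) \<Rightarrow> bool" where
  "harper_identity bs rv ct \<longleftrightarrow>
     (\<forall>\<Psi> A. bs (ct \<Psi> A) = bs \<Psi> \<inter> bs (rv \<Psi> (Neg A)))"

definition levi_identity ::
  "('b \<Rightarrow> 'a form set) \<Rightarrow> ('b \<Rightarrow> 'a form \<Rightarrow> 'b) \<Rightarrow> ('b \<Rightarrow> 'a form \<Rightarrow> 'b) \<Rightarrow> bool" where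
  "levi_identity bs rv ct \<longleftrightarrow>
     (\<forall>\<Psi> A. bs (rv \<Psi> A) = Cn (bs (ct \<Psi> (Neg A)) \<union> {A}))"

definition agm_rev3 :: "('b \<Rightarrow> 'a form set) \<Rightarrow> ('b \<Rightarrow> 'a form \<Rightarrow> 'b) \<Rightarrow> bool" where
  "agm_rev3 bs rv \<longleftrightarrow> (\<forall>\<Psi> A. bs (rv \<Psi> A) \<subseteq> Cn (bs \<Psi> \<union> {A}))"

definition EHI ::
  "('b \<Rightarrow> 'a form set) \<Rightarrow> ('b \<Rightarrow> 'a form \<Rightarrow> 'b) \<Rightarrow> ('b \<Rightarrow> 'a form \<Rightarrow> 'b) \<Rightarrow> bool" where
  "EHI bs rv ct \<longleftrightarrow>
     (\<forall>\<Psi> A B. bs (rv (ct \<Psi> A) B) = bs (rv \<Psi> B) \<inter> bs (rv (rv \<Psi> (Neg A)) B))"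

definition EHIC ::
  "('b \<Rightarrow> 'a form set) \<Rightarrow> ('b \<Rightarrow> 'a form \<Rightarrow> 'b) \<Rightarrow> ('b \<Rightarrow> 'a form \<Rightarrow> 'b) \<Rightarrow> bool" where
  "EHIC bs rv ct \<longleftrightarrow>
     (\<forall>\<Psi> A B. bs (ct (ct \<Psi> A) B) =
        bs \<Psi> \<inter> bs (rv \<Psi> (Neg B)) \<inter> bs (rv \<Psi> (Neg A)) \<inter> bs (rv (rv \<Psi> (Neg A)) (Neg B)))"

end

theory Submission
  imports Defs
begin

text \<open>
  Writing \<open>\<Psi> \<div> A \<div> B\<close> with the Harper Identity twice gives
  \<open>[\<Psi> \<div> A] \<inter> [(\<Psi> \<div> A) * \<not>B]\<close>, and EHI with \<open>\<not>B\<close> for \<open>B\<close> splits the second factor,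
  which is EHIC. Conversely, the Levi and Harper Identities together express \<open>[\<Psi> * B]\<close> as the
  expansion by \<open>B\<close> of \<open>[\<Psi> \<div> \<not>B] = [\<Psi>] \<inter> [\<Psi> * B]\<close>; expansion by a sentence distributes over
  intersections of closed sets, so EHIC for \<open>\<not>B\<close> expands to EHI.
\<close>

lemma Cn_insert_closed:
  assumes "Cn X = X"
  shows "Cn (X \<union> {B}) = {C. Imp B C \<in> X}"
proof
  show "Cn (X \<union> {B}) \<subseteq> {C. Imp B C \<in> X}"
  proof
    fix C assume "C \<in> Cn (X \<union> {B})"
    then have "Imp B C \<in> Cn X" by (auto simp: Cn_def)
    with assms show "C \<in> {C. Imp B C \<in> X}" by simp
  qed
  show "{C. Imp B C \<in> X} \<subseteq> Cn (X \<union> {B})" by (auto simp: Cn_def)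
qed

lemma Cn_Int_closed:
  assumes "Cn X = X" "Cn Y = Y"
  shows "Cn (X \<inter> Y) = X \<inter> Y"
proof -
  have "Cn (X \<inter> Y) \<subseteq> Cn X \<inter> Cn Y" by (auto simp: Cn_def)
  moreover have "X \<inter> Y \<subseteq> Cn (X \<inter> Y)" by (auto simp: Cn_def)
  ultimately show ?thesis using assms by auto
qed

lemma Cn_insert_Int_closed:
  assumes "Cn X = X" "Cn Y = Y"
  shows "Cn ((X \<inter> Y) \<union> {B}) = Cn (X \<union> {B}) \<inter> Cn (Y \<union> {B})"
proof -
  have "Cn ((X \<inter> Y) \<union> {B}) = {C. Imp B C \<in> X \<inter> Y}"
    by (rule Cn_insert_closed) (rule Cn_Int_closed[OF assms])
  also have "\<dots> = Cn (X \<union> {B}) \<inter> Cn (Y \<union> {B})"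
    using Cn_insert_closed[OF assms(1)] Cn_insert_closed[OF assms(2)] by blast
  finally show ?thesis .
qed

lemma Cn_Neg_Neg: "Cn {Neg (Neg A)} = Cn {A}"
  by (auto simp: Cn_def)

lemma agm_revision_Neg_Neg:
  assumes "agm_revision bs rv"
  shows "bs (rv \<Psi> (Neg (Neg A))) = bs (rv \<Psi> A)"
proof -
  have "\<forall>\<Psi> A B. Cn {A} = Cn {B} \<longrightarrow> bs (rv \<Psi> A) = bs (rv \<Psi> B)"
    using assms unfolding agm_revision_def by blast
  then show ?thesis using Cn_Neg_Neg by blast
qed

lemma revision_eq_expansion_of_harper_contraction:
  assumes "harper_identity bs rv ct" "levi_identity bs rv ct" "agm_revision bs rv"
  shows "bs (rv \<Psi> A) = Cn ((bs \<Psi> \<inter> bs (rv \<Psi> A)) \<union> {A})"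
  using assms agm_revision_Neg_Neg[OF assms(3)]
  by (simp add: harper_identity_def levi_identity_def)

lemma EHI_imp_EHIC:
  assumes "harper_identity bs rv ct" "EHI bs rv ct"
  shows "EHIC bs rv ct"
  unfolding EHIC_def
proof (intro allI)
  fix \<Psi> A B
  have "bs (ct (ct \<Psi> A) B) = bs (ct \<Psi> A) \<inter> bs (rv (ct \<Psi> A) (Neg B))"
    using assms(1) by (simp add: harper_identity_def)
  also have "\<dots> = (bs \<Psi> \<inter> bs (rv \<Psi> (Neg A))) \<inter>
      (bs (rv \<Psi> (Neg B)) \<inter> bs (rv (rv \<Psi> (Neg A)) (Neg B)))"
    using assms by (simp add: harper_identity_def EHI_def)
  finally show "bs (ct (ct \<Psi> A) B) =
      bs \<Psi> \<inter> bs (rv \<Psi> (Neg B)) \<inter> bs (rv \<Psi> (Neg A)) \<inter> bs (rv (rv \<Psi> (Neg A)) (Neg B))"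
    by blast
qed

lemma EHIC_imp_EHI:
  assumes closed: "belief_sets_closed bs"
    and rev: "agm_revision bs rv"
    and harper: "harper_identity bs rv ct"
    and levi: "levi_identity bs rv ct"
    and "EHIC bs rv ct"
  shows "EHI bs rv ct"
  unfolding EHI_def
proof (intro allI)
  fix \<Psi> A B
  let ?\<Phi> = "rv \<Psi> (Neg A)"
  have cl: "\<And>\<Psi>. Cn (bs \<Psi>) = bs \<Psi>"
    using closed by (simp add: belief_sets_closed_def)
  have "bs (ct (ct \<Psi> A) (Neg B)) =
      (bs \<Psi> \<inter> bs (rv \<Psi> B)) \<inter> (bs ?\<Phi> \<inter> bs (rv ?\<Phi> B))"
    using \<open>EHIC bs rv ct\<close> agm_revision_Neg_Neg[OF rev] unfolding EHIC_def by auto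
  then have "bs (rv (ct \<Psi> A) B) =
      Cn (((bs \<Psi> \<inter> bs (rv \<Psi> B)) \<inter> (bs ?\<Phi> \<inter> bs (rv ?\<Phi> B))) \<union> {B})"
    using levi by (simp add: levi_identity_def)
  also have "\<dots> = Cn ((bs \<Psi> \<inter> bs (rv \<Psi> B)) \<union> {B}) \<inter> Cn ((bs ?\<Phi> \<inter> bs (rv ?\<Phi> B)) \<union> {B})"
    by (rule Cn_insert_Int_closed) (simp_all add: Cn_Int_closed cl)
  also have "\<dots> = bs (rv \<Psi> B) \<inter> bs (rv ?\<Phi> B)"
    using revision_eq_expansion_of_harper_contraction[OF harper levi rev] by simp
  finally show "bs (rv (ct \<Psi> A) B) = bs (rv \<Psi> B) \<inter> bs (rv ?\<Phi> B)" .
qed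

theorem proposition1:
  fixes bs :: "'b \<Rightarrow> ('a::finite) form set"
    and rv :: "'b \<Rightarrow> 'a form \<Rightarrow> 'b"
    and ct :: "'b \<Rightarrow> 'a form \<Rightarrow> 'b"
  assumes "belief_sets_closed bs"
    and "agm_revision bs rv"
    and "agm_contraction bs ct"
    and "harper_identity bs rv ct"
  shows "(EHI bs rv ct \<longrightarrow> EHIC bs rv ct) \<and>
         (agm_rev3 bs rv \<and> levi_identity bs rv ct \<longrightarrow>
            (EHI bs rv ct \<longleftrightarrow> EHIC bs rv ct))"
  using EHI_imp_EHIC[OF assms(4)] EHIC_imp_EHI[OF assms(1,2,4)] by blast

end
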